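(* Let $S$ be a set, $x\in\mathbb{R}$, $b\neq 0$, and let $f:\mathbb{R}\to S$ be a scenario that is past-periodic on $(-\infty,x)$ with period $b$. If $f$ is periodic, then $b$ is a period of $f$, i.e. $f(y)=f(y+b)$ for all $y\in\mathbb{R}$.
   Context: A scenario is a function $f:\mathbb{R}\to S$. For $b\in\mathbb{R}$, $t^b(y)=y+b$. A scenario $f$ is periodic if there is $c\neq 0$ with $f=f\circ t^c$ ($c$ is then a period of $f$). $f$ is past-periodic on $(-\infty,x)$ with period $b$ if $b\ne 0$ and $f\upharpoonright(-\infty,x)=(f\circ t^b)\upharpoonright(-\infty,x)$. *)

theory Defs
  imports Complex_Main
begin

definition transl :: "real \<Rightarrow> real \<Rightarrow> real" where
  "transl b = (\<lambda>y. y + b)"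

definition is_period :: "(real \<Rightarrow> 'a) \<Rightarrow> real \<Rightarrow> bool" where
  "is_period f c \<longleftrightarrow> c \<noteq> 0 \<and> f = f \<circ> transl c"

definition periodic :: "(real \<Rightarrow> 'a) \<Rightarrow> bool" where
  "periodic f \<longleftrightarrow> (\<exists>c. is_period f c)"

definition past_periodic :: "(real \<Rightarrow> 'a) \<Rightarrow> real \<Rightarrow> real \<Rightarrow> bool" where
  "past_periodic f x b \<longleftrightarrow> b \<noteq> 0 \<and>
     (\<forall>y\<in>{..<x}. f y = (f \<circ> transl b) y)"

end

theory Submission
  imports Defs
begin

text \<open>Both sides of f y = f (y + b) are unchanged when y is moved down by a multiple of a
  positive period d of f; far enough down, the relation holds by past periodicity.\<close>

lemma is_period_iff: "is_period f c \<longleftrightarrow> c \<noteq> 0 \<and> (\<forall>y. f y = f (y + c))"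
  by (auto simp: is_period_def transl_def fun_eq_iff)

lemma past_periodic_iff:
  "past_periodic f x b \<longleftrightarrow> b \<noteq> 0 \<and> (\<forall>y<x. f y = f (y + b))"
  by (auto simp: past_periodic_def transl_def)

lemma is_period_uminus:
  assumes "is_period f c"
  shows "is_period f (- c)"
  unfolding is_period_iff
proof (intro conjI allI)
  show "- c \<noteq> 0" using assms by (simp add: is_period_iff)
  fix y
  have "f (y - c) = f (y - c + c)"
    using assms unfolding is_period_iff by blast
  then show "f y = f (y + - c)" by simp
qed

lemma periodic_imp_pos_period:
  assumes "periodic f"
  obtains d where "d > 0" "is_period f d"
proof -
  obtain c where c: "is_period f c"
    using assms unfolding periodic_def by blast
  show thesis
  proof (cases "c > 0")
    case True
    then show thesis using that c by blast
  next
    case False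
    with c have "- c > 0" by (simp add: is_period_iff)
    then show thesis using that is_period_uminus[OF c] by blast
  qed
qed

lemma is_period_diff_mult:
  assumes "is_period f d"
  shows "f (y - real n * d) = f y"
proof (induction n)
  case (Suc n)
  have "f (y - real (Suc n) * d) = f (y - real (Suc n) * d + d)"
    using assms by (simp add: is_period_iff)
  also have "y - real (Suc n) * d + d = y - real n * d"
    by (simp add: algebra_simps)
  finally show ?case using Suc by simp
qed simp

lemma periodic_eq_shift_if_eq_shift_below:
  assumes "periodic f" and below: "\<And>y. y < x \<Longrightarrow> f y = f (y + b)"
  shows "f y = f (y + b)"
proof -
  obtain d where d: "d > 0" "is_period f d"
    using assms(1) by (rule periodic_imp_pos_period)
  obtain n :: nat where "(\<bar>y\<bar> + \<bar>b\<bar> + \<bar>x\<bar>) / d < real n"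
    using reals_Archimedean2 by blast
  with d(1) have "\<bar>y\<bar> + \<bar>b\<bar> + \<bar>x\<bar> < real n * d"
    by (simp add: divide_less_eq)
  then have low: "y - real n * d + b < x" "y - real n * d < x"
    by linarith+
  have "f y = f (y - real n * d)"
    using is_period_diff_mult[OF d(2)] by (rule sym)
  also have "\<dots> = f (y - real n * d + b)"
    using below[OF low(2)] .
  also have "y - real n * d + b = (y + b) - real n * d"
    by simp
  also have "f \<dots> = f (y + b)"
    using is_period_diff_mult[OF d(2)] .
  finally show ?thesis .
qed

theorem lemma3:
  fixes f :: "real \<Rightarrow> 'a" and x b :: real
  assumes "b \<noteq> 0"
    and "past_periodic f x b"
    and "periodic f"
  shows "is_period f b \<and> (\<forall>y. f y = f (y + b))"
proof -
  have "\<forall>y. f y = f (y + b)"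
    using periodic_eq_shift_if_eq_shift_below[OF assms(3)] assms(2)
    unfolding past_periodic_iff by blast
  with assms(1) show ?thesis
    by (simp add: is_period_iff)
qed

end
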